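(* Let $\Delta\subset G_{2m}$ be an open bounded set with $(\overline\Delta-\overline\Delta)\cap{\rm Sp}\,U=\{0\}$, and let $\Delta_1,\Delta_2\subset H_m$ be compact, disjoint, with $\Delta_1+\Delta_2\subset\Delta$. Then there exist disjoint open neighbourhoods $O_1,O_2\subset\mathbb{R}^{1+d}$ of $\Delta_1,\Delta_2$ respectively such that for all compact $K_1,K_2\subset\mathbb{R}^{1+d}$ with $-K_i\subset O_i$ and $-K_i\cap{\rm Sp}\,U\subset\Delta_i$ ($i=1,2$) one has: $(\overline\Delta+K_1+K_2)\cap{\rm Sp}\,U\subset\{0\}$; $-(K_1+K_2)\subset\Delta$; $(\Delta_i+K_i)\cap{\rm Sp}\,U\subset\{0\}$ for $i=1,2$; and $(\Delta_i+K_j)\cap{\rm Sp}\,U=\emptyset$ for $i\ne j$.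
   Context: ${\rm Sp}\,U\subset\mathbb{R}^{1+d}$ is a set of the form $\{0\}\cup H_m\cup G_\mu$ with $H_m=\{(E,p)\in\mathbb{R}^{1+d}:E=\sqrt{p^2+m^2}\}$, $G_\mu=\{(E,p):E\ge\sqrt{p^2+\mu^2}\}$, $0<m<\mu\le2m$ (it is the joint spectrum of the energy-momentum operators of a translation representation $U$). $G_{2m}$ is $G_\mu$ with $\mu=2m$. *)

theory Defs
  imports "HOL-Analysis.Analysis"
begin

definition mass_shell :: "real \<Rightarrow> (real \<times> (real^'d)) set" where
  "mass_shell m = {(E, p). E = sqrt ((norm p)\<^sup>2 + m\<^sup>2)}"

definition multi_cont :: "real \<Rightarrow> (real \<times> (real^'d)) set" where
  "multi_cont \<mu> = {(E, p). E \<ge> sqrt ((norm p)\<^sup>2 + \<mu>\<^sup>2)}"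

definition SpU :: "real \<Rightarrow> real \<Rightarrow> (real \<times> (real^'d)) set" where
  "SpU m \<mu> = {0} \<union> mass_shell m \<union> multi_cont \<mu>"

definition msum :: "'a::ab_group_add set \<Rightarrow> 'a set \<Rightarrow> 'a set" where
  "msum A B = {a + b | a b. a \<in> A \<and> b \<in> B}"

definition mdiff :: "'a::ab_group_add set \<Rightarrow> 'a set \<Rightarrow> 'a set" where
  "mdiff A B = {a - b | a b. a \<in> A \<and> b \<in> B}"

end

theory Submission
  imports Defs
begin

text \<open>
  By the reverse triangle inequality, the difference of two points of the mass shell
  \<open>H\<^sub>m\<close> always has energy strictly below \<open>\<surd>(p\<^sup>2 + m\<^sup>2)\<close>, so it lies outside the closed
  set \<open>G\<^sub>m \<supseteq> H\<^sub>m \<union> G\<^sub>\<mu>\<close>, and outside \<open>Sp U\<close> altogether unless it vanishes.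
  Hence the compact sets \<open>\<Delta>\<^sub>i - \<Delta>\<^sub>i\<close> stay at positive distance from \<open>G\<^sub>m\<close>,
  \<open>\<Delta>\<^sub>i - \<Delta>\<^sub>j\<close> (\<open>i \<noteq> j\<close>) from \<open>Sp U\<close>, and \<open>\<Delta>\<^sub>1 + \<Delta>\<^sub>2\<close> from the complement of \<open>\<Delta>\<close>.
  If \<open>-K\<^sub>i\<close> lies in a small enough \<open>\<epsilon>\<close>-neighbourhood \<open>O\<^sub>i\<close> of \<open>\<Delta>\<^sub>i\<close>, then
  \<open>\<Delta>\<^sub>i + K\<^sub>j\<close> is \<open>\<epsilon>\<close>-close to \<open>\<Delta>\<^sub>i - \<Delta>\<^sub>j\<close> and \<open>-(K\<^sub>1 + K\<^sub>2)\<close> is \<open>2\<epsilon>\<close>-close to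
  \<open>\<Delta>\<^sub>1 + \<Delta>\<^sub>2\<close>, which gives all claims; \<open>\<Delta> + K\<^sub>1 + K\<^sub>2 \<subseteq> \<Delta> - \<Delta>\<close> then follows from
  \<open>-(K\<^sub>1 + K\<^sub>2) \<subseteq> \<Delta>\<close>. Neither the compactness of \<open>K\<^sub>i\<close>, nor \<open>-K\<^sub>i \<inter> Sp U \<subseteq> \<Delta>\<^sub>i\<close>, nor the
  hypotheses \<open>\<mu> \<le> 2m\<close>, \<open>\<Delta> \<subseteq> G\<^sub>2\<^sub>m\<close> and boundedness of \<open>\<Delta>\<close> are needed.
\<close>

definition thickening :: "'a::metric_space set \<Rightarrow> real \<Rightarrow> 'a set" where
  "thickening X e = (\<Union>x\<in>X. ball x e)"

lemma open_thickening: "open (thickening X e)"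
  by (auto simp: thickening_def)

lemma subset_thickening: "0 < e \<Longrightarrow> X \<subseteq> thickening X e"
  by (auto simp: thickening_def)

lemma eventually_at_right_0I:
  "0 < (d::real) \<Longrightarrow> (\<And>e. 0 < e \<Longrightarrow> e < d \<Longrightarrow> P e) \<Longrightarrow> \<forall>\<^sub>F e in at_right 0. P e"
  by (auto simp: eventually_at_right_field)

lemma eventually_disjoint_thickenings:
  fixes X Y :: "'a::heine_borel set"
  assumes "compact X" "compact Y" "X \<inter> Y = {}"
  shows "\<forall>\<^sub>F e in at_right 0. thickening X e \<inter> thickening Y e = {}"
proof -
  obtain d where "d > 0" and d: "\<forall>x\<in>X. \<forall>y\<in>Y. d \<le> dist x y"
    using separate_compact_closed[OF assms(1) compact_imp_closed[OF assms(2)] assms(3)] by blast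
  have "thickening X e \<inter> thickening Y e = {}" if "e < d / 2" for e
  proof (rule ccontr)
    assume "thickening X e \<inter> thickening Y e \<noteq> {}"
    then obtain x y z where "x \<in> X" "y \<in> Y" "dist x z < e" "dist y z < e"
      by (auto simp: thickening_def)
    moreover have "dist x y \<le> dist x z + dist y z"
      by (rule dist_triangle2)
    ultimately show False
      using d that by fastforce
  qed
  then show ?thesis
    using \<open>d > 0\<close> by (intro eventually_at_right_0I[of "d / 2"]) auto
qed

lemma eventually_msum_thickening_disjoint:
  fixes X Y S :: "'a::{real_normed_vector, heine_borel} set"
  assumes "compact X" "compact Y" "closed S" "mdiff X Y \<inter> S = {}"
  shows "\<forall>\<^sub>F e in at_right 0. \<forall>K. uminus ` K \<subseteq> thickening Y e \<longrightarrow> msum X K \<inter> S = {}"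
proof -
  have "compact (mdiff X Y)"
    unfolding mdiff_def using assms(1,2) by (rule compact_differences)
  then obtain d where "d > 0" and d: "\<forall>u\<in>mdiff X Y. \<forall>s\<in>S. d \<le> dist u s"
    using separate_compact_closed assms(3,4) by blast
  have "msum X K \<inter> S = {}" if "e < d" and K: "uminus ` K \<subseteq> thickening Y e" for e K
  proof (rule ccontr)
    assume "msum X K \<inter> S \<noteq> {}"
    then obtain x k where "x \<in> X" "k \<in> K" "x + k \<in> S"
      by (auto simp: msum_def)
    moreover obtain y where "y \<in> Y" "dist y (-k) < e"
      using K \<open>k \<in> K\<close> by (auto simp: thickening_def)
    moreover have "dist (x - y) (x + k) = dist y (-k)"
      by (simp add: dist_norm algebra_simps norm_minus_commute)
    ultimately show False
      using d \<open>e < d\<close> by (force simp: mdiff_def)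
  qed
  then show ?thesis
    using \<open>d > 0\<close> by (intro eventually_at_right_0I) auto
qed

lemma eventually_uminus_msum_thickenings_subset:
  fixes X Y U :: "'a::{real_normed_vector, heine_borel} set"
  assumes "compact X" "compact Y" "open U" "msum X Y \<subseteq> U"
  shows "\<forall>\<^sub>F e in at_right 0. \<forall>K1 K2. uminus ` K1 \<subseteq> thickening X e \<longrightarrow> uminus ` K2 \<subseteq> thickening Y e
           \<longrightarrow> uminus ` msum K1 K2 \<subseteq> U"
proof -
  have "compact (msum X Y)"
    unfolding msum_def using assms(1,2) by (rule compact_sums)
  then obtain d where "d > 0" and d: "\<forall>u\<in>msum X Y. \<forall>v\<in>-U. d \<le> dist u v"
    using separate_compact_closed[of "msum X Y" "-U"] assms(3,4) by blast
  have "uminus ` msum K1 K2 \<subseteq> U"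
    if "e < d / 2" and K: "uminus ` K1 \<subseteq> thickening X e" "uminus ` K2 \<subseteq> thickening Y e"
    for e K1 K2
  proof
    fix z assume "z \<in> uminus ` msum K1 K2"
    then obtain k1 k2 where "k1 \<in> K1" "k2 \<in> K2" "z = -k1 + -k2"
      by (auto simp: msum_def)
    moreover obtain x y where "x \<in> X" "y \<in> Y" "dist x (-k1) < e" "dist y (-k2) < e"
      using K \<open>k1 \<in> K1\<close> \<open>k2 \<in> K2\<close> by (force simp: thickening_def)
    moreover have "dist (x + y) (-k1 + -k2) \<le> dist x (-k1) + dist y (-k2)"
      by (rule dist_triangle_add)
    ultimately show "z \<in> U"
      using d \<open>e < d / 2\<close> by (force simp: msum_def)
  qed
  then show ?thesis
    using \<open>d > 0\<close> by (intro eventually_at_right_0I[of "d / 2"]) auto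
qed

lemma thickening_radius_exists:
  fixes X Y U C :: "'a::{real_normed_vector, heine_borel} set"
  assumes "compact X" "compact Y" "X \<inter> Y = {}" "open U" "msum X Y \<subseteq> U" "closed C"
    and "mdiff X X \<inter> C = {}" "mdiff Y Y \<inter> C = {}"
    and "mdiff X Y \<inter> insert 0 C = {}" "mdiff Y X \<inter> insert 0 C = {}"
  obtains e where "0 < e" "thickening X e \<inter> thickening Y e = {}"
    and "\<And>K1 K2. uminus ` K1 \<subseteq> thickening X e \<Longrightarrow> uminus ` K2 \<subseteq> thickening Y e
         \<Longrightarrow> uminus ` msum K1 K2 \<subseteq> U"
    and "\<And>K. uminus ` K \<subseteq> thickening X e \<Longrightarrow> msum X K \<inter> C = {}"
    and "\<And>K. uminus ` K \<subseteq> thickening Y e \<Longrightarrow> msum Y K \<inter> C = {}"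
    and "\<And>K. uminus ` K \<subseteq> thickening Y e \<Longrightarrow> msum X K \<inter> insert 0 C = {}"
    and "\<And>K. uminus ` K \<subseteq> thickening X e \<Longrightarrow> msum Y K \<inter> insert 0 C = {}"
proof -
  note ev = eventually_at_right_less[of 0]
    eventually_disjoint_thickenings[OF assms(1-3)]
    eventually_uminus_msum_thickenings_subset[OF assms(1,2,4,5)]
    eventually_msum_thickening_disjoint[OF assms(1,1,6,7)]
    eventually_msum_thickening_disjoint[OF assms(2,2,6,8)]
    eventually_msum_thickening_disjoint[OF assms(1,2) closed_insert[OF assms(6)] assms(9)]
    eventually_msum_thickening_disjoint[OF assms(2,1) closed_insert[OF assms(6)] assms(10)]
  have "\<forall>\<^sub>F e in at_right 0. 0 < e \<and> thickening X e \<inter> thickening Y e = {} \<and>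
      (\<forall>K1 K2. uminus ` K1 \<subseteq> thickening X e \<longrightarrow> uminus ` K2 \<subseteq> thickening Y e
         \<longrightarrow> uminus ` msum K1 K2 \<subseteq> U) \<and>
      (\<forall>K. uminus ` K \<subseteq> thickening X e \<longrightarrow> msum X K \<inter> C = {}) \<and>
      (\<forall>K. uminus ` K \<subseteq> thickening Y e \<longrightarrow> msum Y K \<inter> C = {}) \<and>
      (\<forall>K. uminus ` K \<subseteq> thickening Y e \<longrightarrow> msum X K \<inter> insert 0 C = {}) \<and>
      (\<forall>K. uminus ` K \<subseteq> thickening X e \<longrightarrow> msum Y K \<inter> insert 0 C = {})"
    using ev by (intro eventually_conj)
  from eventually_happens'[OF trivial_limit_at_right_real this]
  obtain e where "0 < e" "thickening X e \<inter> thickening Y e = {}"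
    "\<forall>K1 K2. uminus ` K1 \<subseteq> thickening X e \<longrightarrow> uminus ` K2 \<subseteq> thickening Y e
         \<longrightarrow> uminus ` msum K1 K2 \<subseteq> U"
    "\<forall>K. uminus ` K \<subseteq> thickening X e \<longrightarrow> msum X K \<inter> C = {}"
    "\<forall>K. uminus ` K \<subseteq> thickening Y e \<longrightarrow> msum Y K \<inter> C = {}"
    "\<forall>K. uminus ` K \<subseteq> thickening Y e \<longrightarrow> msum X K \<inter> insert 0 C = {}"
    "\<forall>K. uminus ` K \<subseteq> thickening X e \<longrightarrow> msum Y K \<inter> insert 0 C = {}"
    by (elim exE conjE) (rule that)
  from this(1,2) this(3-7)[rule_format] show thesis
    by (rule that)
qed

lemma msum_msum_subset_mdiff:
  fixes A K1 K2 :: "'a::ab_group_add set"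
  assumes "uminus ` msum K1 K2 \<subseteq> A"
  shows "msum (msum A K1) K2 \<subseteq> mdiff A A"
proof
  fix z assume "z \<in> msum (msum A K1) K2"
  then obtain a k1 k2 where "a \<in> A" "k1 \<in> K1" "k2 \<in> K2" "z = a - (-(k1 + k2))"
    by (auto simp: msum_def algebra_simps)
  moreover have "-(k1 + k2) \<in> A"
    using assms \<open>k1 \<in> K1\<close> \<open>k2 \<in> K2\<close> by (force simp: msum_def)
  ultimately show "z \<in> mdiff A A"
    by (auto simp: mdiff_def)
qed

lemma zero_notin_mdiff: "A \<inter> B = {} \<Longrightarrow> 0 \<notin> mdiff A B"
  by (auto simp: mdiff_def)

lemma closed_multi_cont: "closed (multi_cont \<mu> :: (real \<times> (real^'d)) set)"
proof -
  have "multi_cont \<mu> = {z :: real \<times> (real^'d). sqrt ((norm (snd z))\<^sup>2 + \<mu>\<^sup>2) \<le> fst z}"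
    by (auto simp: multi_cont_def)
  then show ?thesis
    by (auto intro!: closed_Collect_le continuous_intros)
qed

lemma mass_shell_subset_multi_cont: "mass_shell m \<subseteq> multi_cont m"
  by (auto simp: mass_shell_def multi_cont_def)

lemma multi_cont_antimono: "0 \<le> m \<Longrightarrow> m \<le> \<mu> \<Longrightarrow> multi_cont \<mu> \<subseteq> multi_cont m"
  by (auto simp: multi_cont_def intro: order_trans[rotated] power_mono)

lemma SpU_subset: "0 \<le> m \<Longrightarrow> m \<le> \<mu> \<Longrightarrow> SpU m \<mu> \<subseteq> insert 0 (multi_cont m)"
  using mass_shell_subset_multi_cont multi_cont_antimono by (fastforce simp: SpU_def)

lemma sqrt_add_square_le_abs_diff:
  fixes x y m :: real
  shows "sqrt (x\<^sup>2 + m\<^sup>2) \<le> sqrt (y\<^sup>2 + m\<^sup>2) + \<bar>x - y\<bar>"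
  using real_sqrt_sum_squares_triangle_ineq[where a = "x - y" and b = 0 and c = y and d = m] by simp

lemma mass_shell_diff_notin_multi_cont:
  fixes a c :: "real \<times> (real^'d)"
  assumes "0 < m" "a \<in> mass_shell m" "c \<in> mass_shell m"
  shows "a - c \<notin> multi_cont m"
proof
  assume "a - c \<in> multi_cont m"
  obtain E1 p1 E2 p2 where ac: "a = (E1, p1)" "c = (E2, p2)"
    by (cases a, cases c) auto
  then have ge: "sqrt ((norm (p1 - p2))\<^sup>2 + m\<^sup>2) \<le> E1 - E2"
    using \<open>a - c \<in> multi_cont m\<close> by (simp add: multi_cont_def)
  have "E1 - E2 \<le> \<bar>norm p1 - norm p2\<bar>"
    using sqrt_add_square_le_abs_diff[of "norm p1" m "norm p2"] assms(2,3) ac by (simp add: mass_shell_def)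
  also have "\<dots> \<le> norm (p1 - p2)"
    by (rule norm_triangle_ineq3)
  also have "\<dots> < sqrt ((norm (p1 - p2))\<^sup>2 + m\<^sup>2)"
    using assms(1) by (intro real_less_rsqrt) simp
  finally show False
    using ge by simp
qed

lemma mdiff_mass_shell_disjoint_multi_cont:
  fixes A B :: "(real \<times> (real^'d)) set"
  assumes "0 < m" "A \<subseteq> mass_shell m" "B \<subseteq> mass_shell m"
  shows "mdiff A B \<inter> multi_cont m = {}"
  using mass_shell_diff_notin_multi_cont[OF assms(1)] assms(2,3) by (fastforce simp: mdiff_def)

theorem lemma7p3:
  fixes m \<mu> :: real
    and \<Delta> \<Delta>1 \<Delta>2 :: "(real \<times> (real^'d)) set"
  assumes "0 < m" and "m < \<mu>" and "\<mu> \<le> 2 * m"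
    and "open \<Delta>" and "bounded \<Delta>" and "\<Delta> \<subseteq> multi_cont (2 * m)"
    and "mdiff (closure \<Delta>) (closure \<Delta>) \<inter> SpU m \<mu> = {0}"
    and "compact \<Delta>1" and "compact \<Delta>2"
    and "\<Delta>1 \<subseteq> mass_shell m" and "\<Delta>2 \<subseteq> mass_shell m"
    and "\<Delta>1 \<inter> \<Delta>2 = {}"
    and "msum \<Delta>1 \<Delta>2 \<subseteq> \<Delta>"
  shows "\<exists>O1 O2. open O1 \<and> open O2 \<and> \<Delta>1 \<subseteq> O1 \<and> \<Delta>2 \<subseteq> O2 \<and> O1 \<inter> O2 = {} \<and>
    (\<forall>K1 K2. compact K1 \<and> compact K2 \<and>
        uminus ` K1 \<subseteq> O1 \<and> uminus ` K2 \<subseteq> O2 \<and>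
        uminus ` K1 \<inter> SpU m \<mu> \<subseteq> \<Delta>1 \<and> uminus ` K2 \<inter> SpU m \<mu> \<subseteq> \<Delta>2 \<longrightarrow>
        msum (msum (closure \<Delta>) K1) K2 \<inter> SpU m \<mu> \<subseteq> {0} \<and>
        uminus ` (msum K1 K2) \<subseteq> \<Delta> \<and>
        msum \<Delta>1 K1 \<inter> SpU m \<mu> \<subseteq> {0} \<and>
        msum \<Delta>2 K2 \<inter> SpU m \<mu> \<subseteq> {0} \<and>
        msum \<Delta>1 K2 \<inter> SpU m \<mu> = {} \<and>
        msum \<Delta>2 K1 \<inter> SpU m \<mu> = {})"
proof -
  let ?C = "multi_cont m :: (real \<times> (real^'d)) set"
  have "mdiff \<Delta>1 \<Delta>1 \<inter> ?C = {}" "mdiff \<Delta>2 \<Delta>2 \<inter> ?C = {}"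
       "mdiff \<Delta>1 \<Delta>2 \<inter> insert 0 ?C = {}" "mdiff \<Delta>2 \<Delta>1 \<inter> insert 0 ?C = {}"
    using mdiff_mass_shell_disjoint_multi_cont[OF assms(1)] assms(10-12)
      zero_notin_mdiff[of \<Delta>1 \<Delta>2] zero_notin_mdiff[of \<Delta>2 \<Delta>1] by blast+
  then obtain e where "0 < e" and disj: "thickening \<Delta>1 e \<inter> thickening \<Delta>2 e = {}"
    and sum: "\<And>K1 K2. uminus ` K1 \<subseteq> thickening \<Delta>1 e \<Longrightarrow> uminus ` K2 \<subseteq> thickening \<Delta>2 e
         \<Longrightarrow> uminus ` msum K1 K2 \<subseteq> \<Delta>"
    and near11: "\<And>K. uminus ` K \<subseteq> thickening \<Delta>1 e \<Longrightarrow> msum \<Delta>1 K \<inter> ?C = {}"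
    and near22: "\<And>K. uminus ` K \<subseteq> thickening \<Delta>2 e \<Longrightarrow> msum \<Delta>2 K \<inter> ?C = {}"
    and near12: "\<And>K. uminus ` K \<subseteq> thickening \<Delta>2 e \<Longrightarrow> msum \<Delta>1 K \<inter> insert 0 ?C = {}"
    and near21: "\<And>K. uminus ` K \<subseteq> thickening \<Delta>1 e \<Longrightarrow> msum \<Delta>2 K \<inter> insert 0 ?C = {}"
    by (rule thickening_radius_exists[OF assms(8,9,12,4,13) closed_multi_cont]) (rule that)
  have Sp: "SpU m \<mu> \<subseteq> insert 0 ?C"
    using assms(1,2) by (intro SpU_subset) auto
  show ?thesis
  proof (rule exI[of _ "thickening \<Delta>1 e"], rule exI[of _ "thickening \<Delta>2 e"], intro conjI allI impI)
    show "open (thickening \<Delta>1 e)" "open (thickening \<Delta>2 e)"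
      by (rule open_thickening)+
    show "\<Delta>1 \<subseteq> thickening \<Delta>1 e" "\<Delta>2 \<subseteq> thickening \<Delta>2 e"
      using \<open>0 < e\<close> by (rule subset_thickening)+
    show "thickening \<Delta>1 e \<inter> thickening \<Delta>2 e = {}"
      by (rule disj)
    fix K1 K2 :: "(real \<times> (real^'d)) set"
    assume "compact K1 \<and> compact K2 \<and>
      uminus ` K1 \<subseteq> thickening \<Delta>1 e \<and> uminus ` K2 \<subseteq> thickening \<Delta>2 e \<and>
      uminus ` K1 \<inter> SpU m \<mu> \<subseteq> \<Delta>1 \<and> uminus ` K2 \<inter> SpU m \<mu> \<subseteq> \<Delta>2"
    then have K1: "uminus ` K1 \<subseteq> thickening \<Delta>1 e" and K2: "uminus ` K2 \<subseteq> thickening \<Delta>2 e"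
      by blast+
    show "uminus ` msum K1 K2 \<subseteq> \<Delta>"
      using sum K1 K2 by blast
    then have "msum (msum (closure \<Delta>) K1) K2 \<subseteq> mdiff (closure \<Delta>) (closure \<Delta>)"
      using closure_subset by (intro msum_msum_subset_mdiff) blast
    then show "msum (msum (closure \<Delta>) K1) K2 \<inter> SpU m \<mu> \<subseteq> {0}"
      using assms(7) by blast
    have "msum \<Delta>1 K1 \<inter> ?C = {}" "msum \<Delta>2 K2 \<inter> ?C = {}"
      using near11 K1 near22 K2 by blast+
    then show "msum \<Delta>1 K1 \<inter> SpU m \<mu> \<subseteq> {0}" "msum \<Delta>2 K2 \<inter> SpU m \<mu> \<subseteq> {0}"
      using Sp by blast+
    have "msum \<Delta>1 K2 \<inter> insert 0 ?C = {}" "msum \<Delta>2 K1 \<inter> insert 0 ?C = {}"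
      using near12 K2 near21 K1 by blast+
    then show "msum \<Delta>1 K2 \<inter> SpU m \<mu> = {}" "msum \<Delta>2 K1 \<inter> SpU m \<mu> = {}"
      using Sp by blast+
  qed
qed

end
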